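(* Let $D\ge1$ and $0\le d\le D$. Let $G=G_1\,\Box\,\cdots\,\Box\,G_D$ be a cartesian product in which exactly $d$ factors are cycle digraphs $C_{n_\mu}$ ($n_\mu\ge3$ arbitrary) and the remaining $D-d$ factors are simple directed paths $P_{n_\mu}$ ($n_\mu\ge2$ arbitrary). Then $$|V|\cdot r-\operatorname{rank}\mathcal D(G)\le r\cdot\prod_{\mu=1}^D\big(\beta_0(G_\mu)+\beta_1(G_\mu)\big)=r\cdot 2^d,$$ equivalently $\dim\ker\mathcal D(G)/r\le 2^d$.
   Context: The cycle digraph $C_n$ ($n\ge3$) has vertex set $\{1,\dots,n\}$ and edges $i\to i+1$ for $1\le i\le n-1$ together with $n\to1$. The simple directed path $P_n$ ($n\ge2$) has vertex set $\{1,\dots,n\}$ and edges $i\to i+1$ for $1\le i\le n-1$. For a directed graph without multiple edges, the anti-symmetrized adjacency matrix $A_{\mathrm{as}}$ is the $|V|\times|V|$ matrix with: - $(A_{\mathrm{as}})_{ij}=1$ if an edge leaves $i$ and enters $j$; - $(A_{\mathrm{as}})_{ij}=-1$ if an edge leaves $j$ and enters $i$; - $(A_{\mathrm{as}})_{ij}=0$ otherwise. Let $\gamma_1,\dots,\gamma_D$ be complex $r\times r$ matrices satisfying $\gamma_\mu\gamma_\nu+\gamma_\nu\gamma_\mu=2\delta_{\mu\nu}\mathbf 1_r$, and set $r=\operatorname{rank}\gamma$. For $G=G_1\Box\cdots\Box G_D$ with $G_\mu$ having $n_\mu$ vertices, $|V|=\prod_\mu n_\mu$ and $$\mathcal D(G)=\sum_{\mu=1}^D\Big(\mathbf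 1_{n_D}\otimes\cdots\otimes\mathbf 1_{n_{\mu+1}}\otimes A_{\mathrm{as}}(G_\mu)\otimes\mathbf 1_{n_{\mu-1}}\otimes\cdots\otimes\mathbf 1_{n_1}\Big)\otimes\gamma_\mu,$$ where $\otimes$ is the Kronecker product and $\mathbf 1_k$ is the $k\times k$ identity. Betti numbers of a factor graph: $\beta_0$ is the number of connected components and $\beta_1=|E|-|V|+\beta_0$. *)

theory Defs
  imports "Jordan_Normal_Form.DL_Rank" "Jordan_Normal_Form.Matrix_Kernel"
begin

text \<open>Digraphs on the vertex set {0..<n} (0-indexed version of {1..n}), given by an edge set.\<close>

definition cycle_edges :: "nat \<Rightarrow> (nat \<times> nat) set" where
  "cycle_edges n = {(i, (i + 1) mod n) | i. i < n}"

definition path_edges :: "nat \<Rightarrow> (nat \<times> nat) set" where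
  "path_edges n = {(i, i + 1) | i. i + 1 < n}"

definition A_as :: "nat \<Rightarrow> (nat \<times> nat) set \<Rightarrow> complex mat" where
  "A_as n E = mat n n (\<lambda>(i, j). if (i, j) \<in> E then 1 else if (j, i) \<in> E then -1 else 0)"

definition kron :: "'a :: times mat \<Rightarrow> 'a mat \<Rightarrow> 'a mat" where
  "kron A B = mat (dim_row A * dim_row B) (dim_col A * dim_col B)
     (\<lambda>(i, j). A $$ (i div dim_row B, j div dim_col B) * B $$ (i mod dim_row B, j mod dim_col B))"

definition conn_rel :: "nat \<Rightarrow> (nat \<times> nat) set \<Rightarrow> (nat \<times> nat) set" where
  "conn_rel n E = (E \<union> E\<inverse>)\<^sup>* \<inter> ({0..<n} \<times> {0..<n})"

definition beta0 :: "nat \<Rightarrow> (nat \<times> nat) set \<Rightarrow> nat" where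
  "beta0 n E = card ({0..<n} // conn_rel n E)"

definition beta1 :: "nat \<Rightarrow> (nat \<times> nat) set \<Rightarrow> int" where
  "beta1 n E = int (card E) - int n + int (beta0 n E)"

definition factor_edges :: "(nat \<Rightarrow> bool) \<Rightarrow> (nat \<Rightarrow> nat) \<Rightarrow> nat \<Rightarrow> (nat \<times> nat) set" where
  "factor_edges cyc n \<mu> = (if cyc \<mu> then cycle_edges (n \<mu>) else path_edges (n \<mu>))"

text \<open>Dirac operator of the cartesian product G_1 box ... box G_D (factors indexed 0..<D):
  sum over mu of (1_{n_{D}} x ... x 1_{n_{mu+1}} x A_as(G_mu) x 1_{n_{mu-1}} x ... x 1_{n_1}) x gamma_mu.\<close>
definition dirac :: "nat \<Rightarrow> (nat \<Rightarrow> bool) \<Rightarrow> (nat \<Rightarrow> nat) \<Rightarrow> nat \<Rightarrow> (nat \<Rightarrow> complex mat) \<Rightarrow> complex mat" where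
  "dirac D cyc n r \<gamma> =
     (let N = (\<Prod>\<nu><D. n \<nu>);
          T = (\<lambda>\<mu>. kron (kron (kron (1\<^sub>m (\<Prod>\<nu>\<in>{Suc \<mu>..<D}. n \<nu>))
                                    (A_as (n \<mu>) (factor_edges cyc n \<mu>)))
                              (1\<^sub>m (\<Prod>\<nu><\<mu>. n \<nu>)))
                        (\<gamma> \<mu>))
      in mat (N * r) (N * r) (\<lambda>ij. \<Sum>\<mu><D. T \<mu> $$ ij))"

end

theory Submission
  imports Defs
begin

text \<open>Write \<open>dirac = \<Sum>\<^sub>\<mu> X\<^sub>\<mu> \<otimes> \<gamma>\<^sub>\<mu>\<close> with \<open>X\<^sub>\<mu> = 1 \<otimes> A_as(G\<^sub>\<mu>) \<otimes> 1\<close>.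
  The \<open>X\<^sub>\<mu>\<close> commute pairwise and are anti-Hermitian, so the Clifford relations give
  \<open>dirac\<^sup>2 = \<Sum>\<^sub>\<mu> L\<^sub>\<mu>\<^sup>2\<close> for \<open>L\<^sub>\<mu> = X\<^sub>\<mu> \<otimes> 1\<close>, and \<open>\<langle>v, dirac\<^sup>2 v\<rangle> = - \<Sum>\<^sub>\<mu> \<parallel>L\<^sub>\<mu> v\<parallel>\<^sup>2\<close>.
  A vector with \<open>L\<^sub>\<mu> v = 0\<close> for all \<open>\<mu>\<close> is determined by its entries on a grid \<open>R\<close> of
  \<open>r \<cdot> 2\<^sup>d\<close> coordinates: a kernel vector of \<open>A_as(P\<^sub>n)\<close> is fixed by its value at vertex 0,
  one of \<open>A_as(C\<^sub>n)\<close> by its values at 0 and 1. Hence \<open>dirac\<^sup>2 - P\<^sub>R\<close>, with \<open>P\<^sub>R\<close> the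
  coordinate projection onto \<open>R\<close>, is injective, and so
  \<open>|V| r - rank dirac \<le> |V| r - rank dirac\<^sup>2 \<le> |R|\<close>.\<close>

lemma sum_mult_split:
  fixes f :: "nat \<Rightarrow> 'a::comm_monoid_add"
  shows "(\<Sum>j\<in>{0..<a*b}. f j) = (\<Sum>l\<in>{0..<a}. \<Sum>p\<in>{0..<b}. f (l*b + p))"
proof -
  have "(\<Sum>j\<in>{0..<a*b}. f j) = (\<Sum>l\<in>{0..<a}. \<Sum>j\<in>{l*b..<l*b + b}. f j)"
    by (simp add: atLeast0LessThan sum.nat_group)
  also have "\<dots> = (\<Sum>l\<in>{0..<a}. \<Sum>p\<in>{0..<b}. f (l*b + p))"
  proof (rule sum.cong[OF refl])
    fix l show "(\<Sum>j\<in>{l*b..<l*b + b}. f j) = (\<Sum>p\<in>{0..<b}. f (l*b + p))"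
      using sum.atLeastLessThan_shift_0[of f "l*b" "l*b + b"] by (simp add: comp_def)
  qed
  finally show ?thesis .
qed

lemma mult_add_less_mult: "k < (a::nat) \<Longrightarrow> i < m \<Longrightarrow> k*m + i < a*m"
proof -
  assume "k < a" "i < m"
  then have "k*m + i < Suc k * m" by simp
  also have "\<dots> \<le> a*m" using \<open>k < a\<close> by (intro mult_le_mono1) simp
  finally show ?thesis .
qed

lemma index_mult_mat_vec_sum:
  "A \<in> carrier_mat nr nc \<Longrightarrow> v \<in> carrier_vec nc \<Longrightarrow> i < nr \<Longrightarrow>
   (A *\<^sub>v v) $ i = (\<Sum>j\<in>{0..<nc}. A $$ (i,j) * v $ j)"
  by (auto simp: scalar_prod_def intro!: sum.cong)

lemma index_mult_mat_sum:
  "A \<in> carrier_mat nr n \<Longrightarrow> B \<in> carrier_mat n nc \<Longrightarrow> i < nr \<Longrightarrow> j < nc \<Longrightarrow>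
   (A * B) $$ (i,j) = (\<Sum>k\<in>{0..<n}. A $$ (i,k) * B $$ (k,j))"
  by (auto simp: scalar_prod_def intro!: sum.cong)

lemma index_mult_mat_vec_mat_sum:
  fixes T :: "nat \<Rightarrow> 'a::comm_ring_1 mat"
  assumes T: "\<And>\<mu>. \<mu> < D \<Longrightarrow> T \<mu> \<in> carrier_mat m m" and w: "w \<in> carrier_vec m" and i: "i < m"
  shows "(mat m m (\<lambda>ij. \<Sum>\<mu><D. T \<mu> $$ ij) *\<^sub>v w) $ i = (\<Sum>\<mu><D. (T \<mu> *\<^sub>v w) $ i)"
proof -
  have "(mat m m (\<lambda>ij. \<Sum>\<mu><D. T \<mu> $$ ij) *\<^sub>v w) $ i = (\<Sum>j\<in>{0..<m}. (\<Sum>\<mu><D. T \<mu> $$ (i,j)) * w $ j)"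
    using index_mult_mat_vec_sum[OF _ w i, of "mat m m (\<lambda>ij. \<Sum>\<mu><D. T \<mu> $$ ij)"] i by simp
  also have "\<dots> = (\<Sum>\<mu><D. \<Sum>j\<in>{0..<m}. T \<mu> $$ (i,j) * w $ j)"
    by (simp add: sum_distrib_right sum.swap[of _ "{0..<m}"])
  also have "\<dots> = (\<Sum>\<mu><D. (T \<mu> *\<^sub>v w) $ i)"
    by (intro sum.cong refl) (simp add: index_mult_mat_vec_sum[OF T w i])
  finally show ?thesis .
qed

lemma sum_pairs_antisymmetric:
  fixes a :: "nat \<Rightarrow> nat \<Rightarrow> 'a::field_char_0"
  assumes "\<And>\<mu> \<nu>. \<mu> < D \<Longrightarrow> \<nu> < D \<Longrightarrow> \<mu> \<noteq> \<nu> \<Longrightarrow> a \<mu> \<nu> + a \<nu> \<mu> = 0"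
  shows "(\<Sum>\<mu><D. \<Sum>\<nu><D. a \<mu> \<nu>) = (\<Sum>\<mu><D. a \<mu> \<mu>)"
proof -
  let ?S = "\<Sum>\<mu><D. \<Sum>\<nu><D. a \<mu> \<nu>"
  have swap: "?S = (\<Sum>\<mu><D. \<Sum>\<nu><D. a \<nu> \<mu>)" by (rule sum.swap)
  have "2 * ?S = (\<Sum>\<mu><D. \<Sum>\<nu><D. a \<mu> \<nu> + a \<nu> \<mu>)"
    by (subst mult_2, subst (2) swap) (simp add: sum.distrib)
  also have "\<dots> = (\<Sum>\<mu><D. \<Sum>\<nu><D. if \<nu> = \<mu> then 2 * a \<mu> \<mu> else 0)"
    by (intro sum.cong refl) (use assms in auto)
  also have "\<dots> = 2 * (\<Sum>\<mu><D. a \<mu> \<mu>)"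
    by (simp add: sum_distrib_left)
  finally show ?thesis by simp
qed

lemma dim_kron [simp]:
  "dim_row (kron A B) = dim_row A * dim_row B"
  "dim_col (kron A B) = dim_col A * dim_col B"
  unfolding kron_def by simp_all

lemma kron_carrier_mat:
  "A \<in> carrier_mat a b \<Longrightarrow> B \<in> carrier_mat c d \<Longrightarrow> kron A B \<in> carrier_mat (a*c) (b*d)"
  unfolding carrier_mat_def by simp

lemma index_kron:
  "i < dim_row A * dim_row B \<Longrightarrow> j < dim_col A * dim_col B \<Longrightarrow>
   kron A B $$ (i,j) = A $$ (i div dim_row B, j div dim_col B) * B $$ (i mod dim_row B, j mod dim_col B)"
  unfolding kron_def by simp

lemma index_kron_carrier:
  "A \<in> carrier_mat a b \<Longrightarrow> B \<in> carrier_mat c d \<Longrightarrow> i < a*c \<Longrightarrow> j < b*d \<Longrightarrow>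
   kron A B $$ (i,j) = A $$ (i div c, j div d) * B $$ (i mod c, j mod d)"
  using index_kron[of i A B j] by auto

lemma div_mod_mult_digits:
  fixes i b c :: nat
  shows "i div (b*c) = i div c div b" and "i mod (b*c) div c = i div c mod b"
    and "i mod (b*c) mod c = i mod c"
proof -
  show "i div (b*c) = i div c div b" by (metis div_mult2_eq mult.commute)
  show "i mod (b*c) div c = i div c mod b"
  proof (cases "c = 0")
    case False
    have "i mod (b*c) = c * (i div c mod b) + i mod c" by (metis mod_mult2_eq mult.commute)
    then show ?thesis using False by simp
  qed simp
  show "i mod (b*c) mod c = i mod c" by (simp add: mod_mod_cancel)
qed

lemma kron_assoc:
  fixes A B C :: "'a::semigroup_mult mat"
  shows "kron (kron A B) C = kron A (kron B C)"
proof (rule eq_matI)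
  fix i j assume "i < dim_row (kron A (kron B C))" "j < dim_col (kron A (kron B C))"
  then have i: "i < dim_row A * (dim_row B * dim_row C)" and j: "j < dim_col A * (dim_col B * dim_col C)"
    by simp_all
  have "i div dim_row C < dim_row A * dim_row B" "j div dim_col C < dim_col A * dim_col B"
    using i j by (auto intro!: less_mult_imp_div_less simp: mult.assoc)
  moreover have "i mod (dim_row B * dim_row C) < dim_row B * dim_row C"
    "j mod (dim_col B * dim_col C) < dim_col B * dim_col C"
    using i j by (auto intro!: mod_less_divisor gr0I)
  ultimately show "kron (kron A B) C $$ (i, j) = kron A (kron B C) $$ (i, j)"
    using i j by (simp add: index_kron div_mod_mult_digits mult.assoc)
qed (simp_all add: mult.assoc)

lemma kron_one_mat: "kron (1\<^sub>m a) (1\<^sub>m b) = (1\<^sub>m (a*b) :: 'a::semiring_1 mat)"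
proof (rule eq_matI)
  fix i j assume "i < dim_row (1\<^sub>m (a*b) :: 'a mat)" "j < dim_col (1\<^sub>m (a*b) :: 'a mat)"
  then have ij: "i < a*b" "j < a*b" by auto
  then have b: "b > 0" by (cases "b = 0") auto
  have "i div b < a" "j div b < a" using ij b by (simp_all add: div_less_iff_less_mult mult.commute)
  moreover have "(i div b = j div b \<and> i mod b = j mod b) = (i = j)"
    by (metis div_mult_mod_eq)
  ultimately show "kron (1\<^sub>m a) (1\<^sub>m b) $$ (i, j) = (1\<^sub>m (a*b) :: 'a mat) $$ (i, j)"
    using ij b by (auto simp: index_kron)
qed auto

lemma kron_one_mat_1_left: "kron (1\<^sub>m 1) A = (A :: 'a::semiring_1 mat)"
  by (rule eq_matI) (auto simp: index_kron)

lemma kron_mult_kron: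
  fixes A C :: "'a::comm_ring_1 mat"
  assumes A: "A \<in> carrier_mat a b" and B: "B \<in> carrier_mat c d"
    and C: "C \<in> carrier_mat b e" and D: "D \<in> carrier_mat d f"
  shows "kron A B * kron C D = kron (A * C) (B * D)"
proof (rule eq_matI)
  fix i j assume "i < dim_row (kron (A * C) (B * D))" "j < dim_col (kron (A * C) (B * D))"
  then have i: "i < a * c" and j: "j < e * f" using A B C D by auto
  then have "c > 0" "f > 0" by (auto intro!: gr0I)
  then have ij: "i div c < a" "i mod c < c" "j div f < e" "j mod f < f"
    using i j by (auto simp: div_less_iff_less_mult mult.commute)
  have "(kron A B * kron C D) $$ (i,j) = (\<Sum>k\<in>{0..<b*d}. kron A B $$ (i,k) * kron C D $$ (k,j))"
    by (rule index_mult_mat_sum[OF kron_carrier_mat[OF A B] kron_carrier_mat[OF C D] i j])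
  also have "\<dots> = (\<Sum>l\<in>{0..<b}. \<Sum>p\<in>{0..<d}.
      (A $$ (i div c, l) * C $$ (l, j div f)) * (B $$ (i mod c, p) * D $$ (p, j mod f)))"
    unfolding sum_mult_split
  proof (intro sum.cong refl)
    fix l p assume "l \<in> {0..<b}" "p \<in> {0..<d}"
    then show "kron A B $$ (i, l*d + p) * kron C D $$ (l*d + p, j)
      = A $$ (i div c, l) * C $$ (l, j div f) * (B $$ (i mod c, p) * D $$ (p, j mod f))"
      using A B C D i j mult_add_less_mult[of l b p d] by (simp add: index_kron algebra_simps)
  qed
  also have "\<dots> = (A * C) $$ (i div c, j div f) * (B * D) $$ (i mod c, j mod f)"
    by (simp only: sum_product[symmetric] index_mult_mat_sum[OF A C ij(1,3)] index_mult_mat_sum[OF B D ij(2,4)])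
  also have "\<dots> = kron (A * C) (B * D) $$ (i,j)"
    using A B C D i j by (subst index_kron) auto
  finally show "(kron A B * kron C D) $$ (i,j) = kron (A * C) (B * D) $$ (i,j)" .
qed (use A B C D in auto)

lemma kron_add_right:
  fixes A :: "'a::semiring mat"
  assumes B: "B \<in> carrier_mat c d" and C: "C \<in> carrier_mat c d"
  shows "kron A (B + C) = kron A B + kron A C"
proof (rule eq_matI)
  fix i j assume "i < dim_row (kron A B + kron A C)" "j < dim_col (kron A B + kron A C)"
  then have "i < dim_row A * c" "j < dim_col A * d" using B C by auto
  moreover from this have "i mod c < c" "j mod d < d" by (auto intro!: mod_less_divisor gr0I)
  ultimately show "kron A (B + C) $$ (i, j) = (kron A B + kron A C) $$ (i, j)"
    using B C by (simp add: index_kron distrib_left)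
qed (use B C in auto)

lemma index_kron_one_left_mult_vec:
  fixes Z :: "'a::comm_ring_1 mat"
  assumes Z: "Z \<in> carrier_mat m m" and v: "v \<in> carrier_vec (a*m)" and k: "k < a" and i: "i < m"
  shows "(kron (1\<^sub>m a) Z *\<^sub>v v) $ (k*m + i) = (Z *\<^sub>v vec m (\<lambda>p. v $ (k*m + p))) $ i"
proof -
  have "(kron (1\<^sub>m a) Z *\<^sub>v v) $ (k*m + i)
      = (\<Sum>l\<in>{0..<a}. \<Sum>p\<in>{0..<m}. kron (1\<^sub>m a) Z $$ (k*m + i, l*m + p) * v $ (l*m + p))"
    by (simp only: index_mult_mat_vec_sum[OF kron_carrier_mat[OF one_carrier_mat Z] v mult_add_less_mult[OF k i]]
        sum_mult_split)
  also have "\<dots> = (\<Sum>l\<in>{0..<a}. if l = k then (\<Sum>p\<in>{0..<m}. Z $$ (i,p) * v $ (k*m + p)) else 0)"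
    using Z k i mult_add_less_mult[of _ a _ m]
    by (intro sum.cong refl) (auto simp: index_kron intro!: sum.cong)
  also have "\<dots> = (Z *\<^sub>v vec m (\<lambda>p. v $ (k*m + p))) $ i"
    using k by (subst index_mult_mat_vec_sum[OF Z _ i]) auto
  finally show ?thesis .
qed

lemma index_kron_one_right_mult_vec:
  fixes B :: "'a::comm_ring_1 mat"
  assumes B: "B \<in> carrier_mat a a" and v: "v \<in> carrier_vec (a*m)" and k: "k < a" and i: "i < m"
  shows "(kron B (1\<^sub>m m) *\<^sub>v v) $ (k*m + i) = (B *\<^sub>v vec a (\<lambda>l. v $ (l*m + i))) $ k"
proof -
  have "(kron B (1\<^sub>m m) *\<^sub>v v) $ (k*m + i)
      = (\<Sum>l\<in>{0..<a}. \<Sum>p\<in>{0..<m}. kron B (1\<^sub>m m) $$ (k*m + i, l*m + p) * v $ (l*m + p))"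
    by (simp only: index_mult_mat_vec_sum[OF kron_carrier_mat[OF B one_carrier_mat] v mult_add_less_mult[OF k i]]
        sum_mult_split)
  also have "\<dots> = (\<Sum>l\<in>{0..<a}. \<Sum>p\<in>{0..<m}. if p = i then B $$ (k,l) * v $ (l*m + i) else 0)"
    using B k i mult_add_less_mult[of _ a _ m] by (intro sum.cong refl) (auto simp: index_kron)
  also have "\<dots> = (B *\<^sub>v vec a (\<lambda>l. v $ (l*m + i))) $ k"
    using i by (subst index_mult_mat_vec_sum[OF B _ k]) auto
  finally show ?thesis .
qed

lemma clifford_square_eq_one:
  fixes g :: "'a::field_char_0 mat"
  assumes g: "g \<in> carrier_mat r r" and cl: "g * g + g * g = 2 \<cdot>\<^sub>m 1\<^sub>m r"
  shows "g * g = 1\<^sub>m r"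
proof (rule eq_matI)
  fix s t assume "s < dim_row (1\<^sub>m r :: 'a mat)" "t < dim_col (1\<^sub>m r :: 'a mat)"
  moreover have "(g * g + g * g) $$ (s,t) = (2 \<cdot>\<^sub>m 1\<^sub>m r) $$ (s,t)" using cl by simp
  ultimately show "(g * g) $$ (s,t) = (1\<^sub>m r :: 'a mat) $$ (s,t)" using g by simp
qed (use g in auto)

lemma kron_mult_anticommute:
  fixes X Y g h :: "'a::comm_ring_1 mat"
  assumes X: "X \<in> carrier_mat N N" and Y: "Y \<in> carrier_mat N N"
    and g: "g \<in> carrier_mat r r" and h: "h \<in> carrier_mat r r"
    and XY: "X * Y = Y * X" and gh: "g * h + h * g = 0 \<cdot>\<^sub>m 1\<^sub>m r"
  shows "kron X g * kron Y h + kron Y h * kron X g = 0\<^sub>m (N*r) (N*r)"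
proof -
  have XYc: "X * Y \<in> carrier_mat N N" using X Y by simp
  have "kron X g * kron Y h + kron Y h * kron X g = kron (X * Y) (g * h) + kron (X * Y) (h * g)"
    by (simp add: kron_mult_kron[OF X g Y h] kron_mult_kron[OF Y h X g] XY)
  also have "\<dots> = kron (X * Y) (0 \<cdot>\<^sub>m 1\<^sub>m r)"
    using g h by (simp add: kron_add_right[symmetric, of _ r r] gh)
  also have "\<dots> = 0\<^sub>m (N*r) (N*r)"
  proof (rule eq_matI)
    fix i j assume "i < dim_row (0\<^sub>m (N*r) (N*r) :: 'a mat)" "j < dim_col (0\<^sub>m (N*r) (N*r) :: 'a mat)"
    then have "i < N*r" "j < N*r" "i mod r < r" "j mod r < r" by (auto intro!: mod_less_divisor gr0I)
    then show "kron (X * Y) (0 \<cdot>\<^sub>m 1\<^sub>m r) $$ (i,j) = (0\<^sub>m (N*r) (N*r) :: 'a mat) $$ (i,j)"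
      by (simp add: index_kron_carrier[OF XYc smult_carrier_mat[OF one_carrier_mat]])
  qed (use X Y in simp_all)
  finally show ?thesis .
qed

text \<open>The cross terms of the square cancel in pairs by anticommutation.\<close>

lemma clifford_sum_square:
  fixes X g :: "nat \<Rightarrow> 'a::field_char_0 mat"
  assumes X: "\<And>\<mu>. \<mu> < D \<Longrightarrow> X \<mu> \<in> carrier_mat N N"
    and g: "\<And>\<mu>. \<mu> < D \<Longrightarrow> g \<mu> \<in> carrier_mat r r"
    and comm: "\<And>\<mu> \<nu>. \<mu> < D \<Longrightarrow> \<nu> < D \<Longrightarrow> X \<mu> * X \<nu> = X \<nu> * X \<mu>"
    and cl: "\<And>\<mu> \<nu>. \<mu> < D \<Longrightarrow> \<nu> < D \<Longrightarrow>
               g \<mu> * g \<nu> + g \<nu> * g \<mu> = (if \<mu> = \<nu> then 2 else 0) \<cdot>\<^sub>m 1\<^sub>m r"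
  shows "mat (N*r) (N*r) (\<lambda>ij. \<Sum>\<mu><D. kron (X \<mu>) (g \<mu>) $$ ij)
           * mat (N*r) (N*r) (\<lambda>ij. \<Sum>\<mu><D. kron (X \<mu>) (g \<mu>) $$ ij)
         = mat (N*r) (N*r) (\<lambda>ij. \<Sum>\<mu><D. (kron (X \<mu>) (1\<^sub>m r) * kron (X \<mu>) (1\<^sub>m r)) $$ ij)"
    (is "?M * ?M = ?S")
proof (rule eq_matI)
  define T where "T \<mu> = kron (X \<mu>) (g \<mu>)" for \<mu>
  have T: "T \<mu> \<in> carrier_mat (N*r) (N*r)" if "\<mu> < D" for \<mu>
    unfolding T_def using X[OF that] g[OF that] by (rule kron_carrier_mat)
  fix i j assume "i < dim_row ?S" "j < dim_col ?S"
  then have i: "i < N*r" and j: "j < N*r" by simp_all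
  have cross: "(T \<mu> * T \<nu>) $$ (i,j) + (T \<nu> * T \<mu>) $$ (i,j) = 0"
    if \<mu>: "\<mu> < D" and \<nu>: "\<nu> < D" and "\<mu> \<noteq> \<nu>" for \<mu> \<nu>
  proof -
    have "T \<mu> * T \<nu> + T \<nu> * T \<mu> = 0\<^sub>m (N*r) (N*r)"
      unfolding T_def using cl[OF \<mu> \<nu>] \<open>\<mu> \<noteq> \<nu>\<close>
      by (intro kron_mult_anticommute X g comm \<mu> \<nu>) simp
    then have "(T \<mu> * T \<nu> + T \<nu> * T \<mu>) $$ (i,j) = 0" using i j by simp
    then show ?thesis using T[OF \<mu>] T[OF \<nu>] i j by simp
  qed
  have square: "T \<mu> * T \<mu> = kron (X \<mu>) (1\<^sub>m r) * kron (X \<mu>) (1\<^sub>m r)" if \<mu>: "\<mu> < D" for \<mu>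
    using clifford_square_eq_one[OF g[OF \<mu>]] cl[OF \<mu> \<mu>] unfolding T_def
    by (simp add: kron_mult_kron[OF X[OF \<mu>] g[OF \<mu>] X[OF \<mu>] g[OF \<mu>]]
        kron_mult_kron[OF X[OF \<mu>] one_carrier_mat X[OF \<mu>] one_carrier_mat])
  have "(?M * ?M) $$ (i,j) = (\<Sum>k\<in>{0..<N*r}. (\<Sum>\<mu><D. T \<mu> $$ (i,k)) * (\<Sum>\<nu><D. T \<nu> $$ (k,j)))"
    using i j by (subst index_mult_mat_sum[of _ "N*r" "N*r" _ "N*r"]) (auto simp: T_def)
  also have "\<dots> = (\<Sum>\<mu><D. \<Sum>\<nu><D. \<Sum>k\<in>{0..<N*r}. T \<mu> $$ (i,k) * T \<nu> $$ (k,j))"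
    by (simp add: sum_product sum.swap[of _ "{0..<N*r}"])
  also have "\<dots> = (\<Sum>\<mu><D. \<Sum>\<nu><D. (T \<mu> * T \<nu>) $$ (i,j))"
    using T i j by (intro sum.cong refl) (simp add: index_mult_mat_sum[of _ "N*r" "N*r" _ "N*r"])
  also have "\<dots> = (\<Sum>\<mu><D. (T \<mu> * T \<mu>) $$ (i,j))"
    by (rule sum_pairs_antisymmetric) (rule cross)
  finally show "(?M * ?M) $$ (i,j) = ?S $$ (i,j)"
    using i j square by simp
qed simp_all

definition skew_hermitian :: "complex mat \<Rightarrow> bool" where
  "skew_hermitian M \<longleftrightarrow> (\<forall>i<dim_row M. \<forall>j<dim_row M. M $$ (i,j) = - cnj (M $$ (j,i)))"

lemma skew_hermitian_square_form:
  fixes L :: "complex mat"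
  assumes L: "L \<in> carrier_mat m m" and sk: "skew_hermitian L" and v: "v \<in> carrier_vec m"
  shows "(\<Sum>i\<in>{0..<m}. cnj (v$i) * (L *\<^sub>v (L *\<^sub>v v)) $ i)
       = - (\<Sum>k\<in>{0..<m}. complex_of_real ((cmod ((L *\<^sub>v v) $ k))\<^sup>2))"
proof -
  define w where "w = L *\<^sub>v v"
  have w: "w \<in> carrier_vec m" unfolding w_def using L v by simp
  have "(\<Sum>i\<in>{0..<m}. cnj (v$i) * (L *\<^sub>v w) $ i) = (\<Sum>i\<in>{0..<m}. cnj (v$i) * (\<Sum>k\<in>{0..<m}. L $$ (i,k) * w $ k))"
    by (intro sum.cong refl) (simp add: index_mult_mat_vec_sum[OF L w])
  also have "\<dots> = (\<Sum>i\<in>{0..<m}. \<Sum>k\<in>{0..<m}. cnj (v$i) * L $$ (i,k) * w $ k)"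
    by (simp add: sum_distrib_left mult.assoc)
  also have "\<dots> = (\<Sum>k\<in>{0..<m}. \<Sum>i\<in>{0..<m}. cnj (v$i) * L $$ (i,k) * w $ k)"
    by (rule sum.swap)
  also have "\<dots> = (\<Sum>k\<in>{0..<m}. w $ k * (\<Sum>i\<in>{0..<m}. cnj (v$i) * L $$ (i,k)))"
    by (intro sum.cong refl) (simp add: sum_distrib_left algebra_simps)
  also have "\<dots> = (\<Sum>k\<in>{0..<m}. - (w $ k * cnj (w $ k)))"
  proof (intro sum.cong refl)
    fix k assume "k \<in> {0..<m}"
    then have k: "k < m" by simp
    have "(\<Sum>i\<in>{0..<m}. cnj (v$i) * L $$ (i,k)) = (\<Sum>i\<in>{0..<m}. - cnj (L $$ (k,i) * v $ i))"
    proof (intro sum.cong refl)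
      fix i assume "i \<in> {0..<m}"
      then have i: "i < m" by simp
      have dL: "dim_row L = m" using L by simp
      have "L $$ (i,k) = - cnj (L $$ (k,i))" using sk i k dL unfolding skew_hermitian_def by blast
      then show "cnj (v$i) * L $$ (i,k) = - cnj (L $$ (k,i) * v $ i)" by simp
    qed
    also have "\<dots> = - cnj (w $ k)"
      unfolding w_def index_mult_mat_vec_sum[OF L v k] by (simp add: sum_negf)
    finally show "w $ k * (\<Sum>i\<in>{0..<m}. cnj (v$i) * L $$ (i,k)) = - (w $ k * cnj (w $ k))" by simp
  qed
  also have "\<dots> = - (\<Sum>k\<in>{0..<m}. complex_of_real ((cmod (w $ k))\<^sup>2))"
    by (simp only: complex_norm_square sum_negf)
  finally show ?thesis unfolding w_def .
qed

lemma skew_hermitian_kron_one_left: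
  assumes B: "B \<in> carrier_mat m m" and sk: "skew_hermitian B"
  shows "skew_hermitian (kron (1\<^sub>m a) B)"
  unfolding skew_hermitian_def
proof (intro allI impI)
  fix i j assume i: "i < dim_row (kron (1\<^sub>m a) B)" and j: "j < dim_row (kron (1\<^sub>m a) B)"
  then have i': "i < a*m" and j': "j < a*m" using B by auto
  have m: "m > 0" using i' by (cases m) auto
  have d: "i div m < a" "j div m < a" "i mod m < m" "j mod m < m" using i' j' m
    by (auto simp: less_mult_imp_div_less)
  have dB: "dim_row B = m" using B by simp
  have e: "B $$ (i mod m, j mod m) = - cnj (B $$ (j mod m, i mod m))" using sk d dB unfolding skew_hermitian_def by blast
  show "kron (1\<^sub>m a) B $$ (i, j) = - cnj (kron (1\<^sub>m a) B $$ (j, i))"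
    using e B d by (simp add: index_kron_carrier[OF one_carrier_mat B i' j'] index_kron_carrier[OF one_carrier_mat B j' i'])
qed

lemma skew_hermitian_kron_one_right:
  assumes B: "B \<in> carrier_mat m m" and sk: "skew_hermitian B"
  shows "skew_hermitian (kron B (1\<^sub>m a))"
  unfolding skew_hermitian_def
proof (intro allI impI)
  fix i j assume i: "i < dim_row (kron B (1\<^sub>m a))" and j: "j < dim_row (kron B (1\<^sub>m a))"
  then have i': "i < m*a" and j': "j < m*a" using B by auto
  have a: "a > 0" using i' by (cases a) auto
  have d: "i div a < m" "j div a < m" "i mod a < a" "j mod a < a" using i' j' a
    by (auto simp: less_mult_imp_div_less)
  have dB: "dim_row B = m" using B by simp
  have e: "B $$ (i div a, j div a) = - cnj (B $$ (j div a, i div a))" using sk d dB unfolding skew_hermitian_def by blast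
  show "kron B (1\<^sub>m a) $$ (i, j) = - cnj (kron B (1\<^sub>m a) $$ (j, i))"
    using e B d by (simp add: index_kron_carrier[OF B one_carrier_mat i' j'] index_kron_carrier[OF B one_carrier_mat j' i'])
qed

lemma skew_hermitian_A_as:
  assumes "\<And>i j. (i,j) \<in> E \<Longrightarrow> (j,i) \<notin> E"
  shows "skew_hermitian (A_as n E)"
  using assms unfolding skew_hermitian_def A_as_def by auto

definition diag_on :: "nat \<Rightarrow> nat set \<Rightarrow> 'a::zero \<Rightarrow> 'a mat" where
  "diag_on m R c = mat m m (\<lambda>(i,j). if i = j \<and> i \<in> R then c else 0)"

lemma diag_on_carrier_mat: "diag_on m R c \<in> carrier_mat m m"
  unfolding diag_on_def by simp

lemma dim_diag_on [simp]: "dim_row (diag_on m R c) = m" "dim_col (diag_on m R c) = m"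
  unfolding diag_on_def by simp_all

lemma index_diag_on_mult_vec:
  fixes c :: "'a::comm_ring_1"
  assumes "v \<in> carrier_vec m" "i < m"
  shows "(diag_on m R c *\<^sub>v v) $ i = (if i \<in> R then c * v $ i else 0)"
proof -
  have "(diag_on m R c *\<^sub>v v) $ i = (\<Sum>j\<in>{0..<m}. diag_on m R c $$ (i,j) * v $ j)"
    by (rule index_mult_mat_vec_sum[OF diag_on_carrier_mat assms])
  also have "\<dots> = (\<Sum>j\<in>{0..<m}. if j = i then (if i \<in> R then c * v $ i else 0) else 0)"
    using assms by (intro sum.cong refl) (auto simp: diag_on_def)
  finally show ?thesis using assms by simp
qed

lemma index_sum_squares_diag_on_mult_vec:
  fixes L :: "nat \<Rightarrow> 'a::comm_ring_1 mat"
  assumes L: "\<And>\<mu>. \<mu> < D \<Longrightarrow> L \<mu> \<in> carrier_mat m m" and v: "v \<in> carrier_vec m" and i: "i < m"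
  shows "((mat m m (\<lambda>ij. \<Sum>\<mu><D. (L \<mu> * L \<mu>) $$ ij) + diag_on m R c) *\<^sub>v v) $ i
       = (\<Sum>\<mu><D. (L \<mu> *\<^sub>v (L \<mu> *\<^sub>v v)) $ i) + (if i \<in> R then c * v $ i else 0)"
proof -
  let ?S = "mat m m (\<lambda>ij. \<Sum>\<mu><D. (L \<mu> * L \<mu>) $$ ij)"
  have LL: "L \<mu> * L \<mu> \<in> carrier_mat m m" if "\<mu> < D" for \<mu> using L[OF that] by simp
  have "((?S + diag_on m R c) *\<^sub>v v) $ i = (?S *\<^sub>v v) $ i + (diag_on m R c *\<^sub>v v) $ i"
    using v i by (simp add: add_mult_distrib_mat_vec[of _ m m] diag_on_carrier_mat del: index_mult_mat_vec)
  also have "(?S *\<^sub>v v) $ i = (\<Sum>\<mu><D. ((L \<mu> * L \<mu>) *\<^sub>v v) $ i)"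
    by (rule index_mult_mat_vec_mat_sum[OF LL v i])
  also have "\<dots> = (\<Sum>\<mu><D. (L \<mu> *\<^sub>v (L \<mu> *\<^sub>v v)) $ i)"
    by (intro sum.cong refl) (use L v in \<open>simp add: assoc_mult_mat_vec[of _ m m _ m]\<close>)
  finally show ?thesis by (simp only: index_diag_on_mult_vec[OF v i])
qed

text \<open>Pairing the equation with \<open>v\<close> turns it into a sum of squared norms that vanishes.\<close>

lemma skew_hermitian_squares_kernel:
  fixes L :: "nat \<Rightarrow> complex mat"
  assumes L: "\<And>\<mu>. \<mu> < D \<Longrightarrow> L \<mu> \<in> carrier_mat m m"
    and sk: "\<And>\<mu>. \<mu> < D \<Longrightarrow> skew_hermitian (L \<mu>)"
    and v: "v \<in> carrier_vec m" and R: "R \<subseteq> {0..<m}"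
    and ker: "(mat m m (\<lambda>ij. \<Sum>\<mu><D. (L \<mu> * L \<mu>) $$ ij) + diag_on m R (-1)) *\<^sub>v v = 0\<^sub>v m"
  shows "\<forall>\<mu><D. L \<mu> *\<^sub>v v = 0\<^sub>v m" and "\<forall>j\<in>R. v $ j = 0"
proof -
  define s1 where "s1 = (\<Sum>\<mu><D. \<Sum>k\<in>{0..<m}. (cmod ((L \<mu> *\<^sub>v v) $ k))\<^sup>2)"
  define s2 where "s2 = (\<Sum>i\<in>R. (cmod (v $ i))\<^sup>2)"
  have pointwise: "(\<Sum>\<mu><D. (L \<mu> *\<^sub>v (L \<mu> *\<^sub>v v)) $ i) = (if i \<in> R then v $ i else 0)"
    if i: "i < m" for i
  proof -
    have "((mat m m (\<lambda>ij. \<Sum>\<mu><D. (L \<mu> * L \<mu>) $$ ij) + diag_on m R (-1)) *\<^sub>v v) $ i = 0\<^sub>v m $ i"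
      by (simp only: ker)
    then show ?thesis
      using i by (cases "i \<in> R")
        (simp_all add: index_sum_squares_diag_on_mult_vec[OF L v i] algebra_simps del: index_mult_mat_vec)
  qed
  have "0 = (\<Sum>i\<in>{0..<m}. cnj (v $ i) * ((\<Sum>\<mu><D. (L \<mu> *\<^sub>v (L \<mu> *\<^sub>v v)) $ i) - (if i \<in> R then v $ i else 0)))"
    using pointwise by simp
  also have "\<dots> = (\<Sum>i\<in>{0..<m}. cnj (v $ i) * (\<Sum>\<mu><D. (L \<mu> *\<^sub>v (L \<mu> *\<^sub>v v)) $ i))
                 - (\<Sum>i\<in>{0..<m}. cnj (v $ i) * (if i \<in> R then v $ i else 0))"
    by (simp only: right_diff_distrib sum_subtractf)
  also have "(\<Sum>i\<in>{0..<m}. cnj (v $ i) * (\<Sum>\<mu><D. (L \<mu> *\<^sub>v (L \<mu> *\<^sub>v v)) $ i))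
      = (\<Sum>\<mu><D. \<Sum>i\<in>{0..<m}. cnj (v $ i) * (L \<mu> *\<^sub>v (L \<mu> *\<^sub>v v)) $ i)"
    by (simp only: sum_distrib_left) (rule sum.swap)
  also have "(\<Sum>i\<in>{0..<m}. cnj (v $ i) * (if i \<in> R then v $ i else 0)) = (\<Sum>i\<in>R. v $ i * cnj (v $ i))"
    using R by (simp add: if_distrib[of "\<lambda>x. cnj _ * x"] sum.If_cases Int_absorb1 mult.commute)
  also have "\<dots> = complex_of_real s2"
    unfolding s2_def of_real_sum complex_norm_square ..
  also have "(\<Sum>\<mu><D. \<Sum>i\<in>{0..<m}. cnj (v $ i) * (L \<mu> *\<^sub>v (L \<mu> *\<^sub>v v)) $ i)
      = (\<Sum>\<mu><D. - (\<Sum>k\<in>{0..<m}. complex_of_real ((cmod ((L \<mu> *\<^sub>v v) $ k))\<^sup>2)))"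
    by (rule sum.cong[OF refl]) (simp add: skew_hermitian_square_form[OF L sk v])
  also have "\<dots> = - complex_of_real s1"
    unfolding s1_def of_real_sum sum_negf ..
  finally have "- s1 = s2" by simp
  then have "s1 + s2 = 0" by simp
  moreover have "s1 \<ge> 0" "s2 \<ge> 0" unfolding s1_def s2_def by (intro sum_nonneg; simp)+
  ultimately have "s1 = 0" "s2 = 0" by linarith+
  moreover have "finite R" using R finite_subset by blast
  ultimately show "\<forall>\<mu><D. L \<mu> *\<^sub>v v = 0\<^sub>v m" and "\<forall>j\<in>R. v $ j = 0"
    unfolding s1_def s2_def
    by (auto simp: sum_nonneg_eq_0_iff sum_nonneg carrier_matD(1)[OF L] intro!: eq_vecI)
qed

context vec_space
begin

lemma rank_mult_le:
  assumes A: "A \<in> carrier_mat n k" and B: "B \<in> carrier_mat k nc"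
  shows "rank (A * B) \<le> rank A"
proof -
  define W where "W = span (set (cols A))"
  have cA: "set (cols A) \<subseteq> carrier_vec n" using A cols_dim by blast
  have sub: "set (cols (A * B)) \<subseteq> W"
  proof
    fix x assume "x \<in> set (cols (A * B))"
    then obtain j where j: "j < dim_col (A*B)" and x: "x = col (A*B) j"
      by (metis cols_length cols_nth in_set_conv_nth)
    have j': "j < nc" using j B by simp
    have "x = A *\<^sub>v col B j" using x col_mult2[OF A B j'] by simp
    moreover have "col B j \<in> carrier_vec k" using B j' by simp
    ultimately have "x \<in> col_space A" using col_space_eq[OF A] A by auto
    then show "x \<in> W" unfolding W_def col_space_def .
  qed
  have vsW: "vectorspace class_ring (vs W)" unfolding W_def
    using span_is_subspace[THEN subspace_is_vs, OF cA] by auto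
  have smW: "submodule class_ring W V" unfolding W_def using cA by (simp add: span_is_submodule)
  have ss: "subspace class_ring (span (set (cols (A*B)))) (vs W)"
    using vectorspace.span_is_subspace[OF vsW, of "set (cols (A*B))", unfolded
      span_li_not_depend(1)[OF sub smW]] sub by auto
  have "vectorspace.fin_dim class_ring (vs W)"
    unfolding W_def by (rule fin_dim_span_cols[OF A])
  moreover have "vectorspace.fin_dim class_ring (vs W\<lparr>carrier := span (set (cols (A*B)))\<rparr>)"
    using fin_dim_span_cols[OF mult_carrier_mat[OF A B]] by simp
  ultimately have "rank (A*B) \<le> vectorspace.dim class_ring (vs W)"
    unfolding rank_def using vectorspace.subspace_dim[OF vsW ss] by simp
  then show ?thesis unfolding rank_def W_def .
qed

lemma rank_diag_on_le:
  assumes "R \<subseteq> {0..<n}"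
  shows "rank (diag_on n R c) \<le> card R"
proof -
  have "finite R" using assms finite_subset by blast
  then show ?thesis
  proof (induction R rule: finite_induct)
    case empty
    have "diag_on n {} c = 0\<^sub>m n n" unfolding diag_on_def by (rule eq_matI) auto
    then show ?case using rank_0I by simp
  next
    case (insert j R)
    define E where "E = mat n n (\<lambda>(a,b). if a = j \<and> b = j then c else 0)"
    have E: "E \<in> carrier_mat n n" unfolding E_def by simp
    have "diag_on n (insert j R) c = E + diag_on n R c"
      unfolding E_def diag_on_def by (rule eq_matI) (use insert.hyps in auto)
    moreover have "rank E \<le> 1"
      by (rule rank_le_1_product_entries[OF E, of "\<lambda>a. if a = j then c else 0" "\<lambda>b. if b = j then 1 else 0"])
        (auto simp: E_def)
    ultimately show ?case
      using rank_subadditive[OF E diag_on_carrier_mat, of R c] insert by simp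
  qed
qed

lemma rank_ge_of_square_diag_on_injective:
  assumes A: "A \<in> carrier_mat n n" and R: "R \<subseteq> {0..<n}"
    and inj: "\<And>v. v \<in> carrier_vec n \<Longrightarrow> (A * A + diag_on n R c) *\<^sub>v v = 0\<^sub>v n \<Longrightarrow> v = 0\<^sub>v n"
  shows "n \<le> rank A + card R"
proof -
  have M: "A * A + diag_on n R c \<in> carrier_mat n n" using A diag_on_carrier_mat[of n R c] by simp
  then have "det (A * A + diag_on n R c) \<noteq> 0"
    using det_0_iff_vec_prod_zero inj by blast
  then have "n = rank (A * A + diag_on n R c)"
    using det_rank_iff[OF M] by simp
  also have "\<dots> \<le> rank (A * A) + rank (diag_on n R c)"
    by (rule rank_subadditive[OF _ diag_on_carrier_mat]) (use A in simp)
  also have "\<dots> \<le> rank A + card R"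
    by (rule add_mono[OF rank_mult_le[OF A A] rank_diag_on_le[OF R]])
  finally show ?thesis .
qed

end

definition kron_lift :: "(nat \<Rightarrow> nat) \<Rightarrow> nat \<Rightarrow> nat \<Rightarrow> 'a::semiring_1 mat \<Rightarrow> 'a mat" where
  "kron_lift n D \<mu> B = kron (kron (1\<^sub>m (\<Prod>\<nu>\<in>{Suc \<mu>..<D}. n \<nu>)) B) (1\<^sub>m (\<Prod>\<nu><\<mu>. n \<nu>))"

lemma prod_lessThan_split3:
  "\<mu> < D \<Longrightarrow> (\<Prod>\<nu><D. f \<nu>) = (\<Prod>\<nu>\<in>{Suc \<mu>..<D}. f \<nu>) * f \<mu> * (\<Prod>\<nu><\<mu>. f \<nu>)"
  for f :: "nat \<Rightarrow> 'a::comm_monoid_mult"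
  using prod.atLeastLessThan_concat[of 0 \<mu> D f] prod.atLeast_Suc_lessThan[of \<mu> D f]
  by (simp add: lessThan_atLeast0 algebra_simps)

lemma prod_atLeastLessThan_split3:
  "\<mu> < \<nu> \<Longrightarrow> \<nu> < D \<Longrightarrow>
   (\<Prod>k\<in>{Suc \<mu>..<D}. f k) = (\<Prod>k\<in>{Suc \<nu>..<D}. f k) * f \<nu> * (\<Prod>k\<in>{Suc \<mu>..<\<nu>}. f k)"
  for f :: "nat \<Rightarrow> 'a::comm_monoid_mult"
  using prod.atLeastLessThan_concat[of "Suc \<mu>" \<nu> D f] prod.atLeast_Suc_lessThan[of \<nu> D f]
  by (simp add: algebra_simps)

lemma kron_lift_carrier_mat:
  "\<mu> < D \<Longrightarrow> B \<in> carrier_mat (n \<mu>) (n \<mu>) \<Longrightarrow>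
   kron_lift n D \<mu> B \<in> carrier_mat (\<Prod>\<nu><D. n \<nu>) (\<Prod>\<nu><D. n \<nu>)"
  unfolding kron_lift_def prod_lessThan_split3[of \<mu> D n]
  by (intro kron_carrier_mat one_carrier_mat)

lemma kron_mult_kron5:
  fixes P1 :: "'a::comm_ring_1 mat"
  assumes p1: "P1 \<in> carrier_mat s1 s1" and p2: "P2 \<in> carrier_mat s2 s2" and p3: "P3 \<in> carrier_mat s3 s3"
    and p4: "P4 \<in> carrier_mat s4 s4" and p5: "P5 \<in> carrier_mat s5 s5"
    and q1: "Q1 \<in> carrier_mat s1 s1" and q2: "Q2 \<in> carrier_mat s2 s2" and q3: "Q3 \<in> carrier_mat s3 s3"
    and q4: "Q4 \<in> carrier_mat s4 s4" and q5: "Q5 \<in> carrier_mat s5 s5"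
  shows "kron (kron (kron (kron P1 P2) P3) P4) P5 * kron (kron (kron (kron Q1 Q2) Q3) Q4) Q5
       = kron (kron (kron (kron (P1*Q1) (P2*Q2)) (P3*Q3)) (P4*Q4)) (P5*Q5)"
proof -
  note c1 = kron_carrier_mat[OF p1 p2] kron_carrier_mat[OF q1 q2]
  note c2 = kron_carrier_mat[OF c1(1) p3] kron_carrier_mat[OF c1(2) q3]
  note c3 = kron_carrier_mat[OF c2(1) p4] kron_carrier_mat[OF c2(2) q4]
  show ?thesis
    by (simp only: kron_mult_kron[OF c3(1) p5 c3(2) q5] kron_mult_kron[OF c2(1) p4 c2(2) q4]
        kron_mult_kron[OF c1(1) p3 c1(2) q3] kron_mult_kron[OF p1 p2 q1 q2])
qed

lemma kron_lift_commute_less: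
  fixes B C :: "'a::comm_ring_1 mat"
  assumes \<mu>\<nu>: "\<mu> < \<nu>" and \<nu>: "\<nu> < D"
    and B: "B \<in> carrier_mat (n \<mu>) (n \<mu>)" and C: "C \<in> carrier_mat (n \<nu>) (n \<nu>)"
  shows "kron_lift n D \<mu> B * kron_lift n D \<nu> C = kron_lift n D \<nu> C * kron_lift n D \<mu> B"
proof -
  define H where "H = (\<Prod>k\<in>{Suc \<nu>..<D}. n k)"
  define M where "M = (\<Prod>k\<in>{Suc \<mu>..<\<nu>}. n k)"
  define L where "L = (\<Prod>k<\<mu>. n k)"
  have lift_\<mu>: "kron_lift n D \<mu> B = kron (kron (kron (kron (1\<^sub>m H) (1\<^sub>m (n \<nu>))) (1\<^sub>m M)) B) (1\<^sub>m L)"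
    unfolding kron_lift_def prod_atLeastLessThan_split3[OF \<mu>\<nu> \<nu>] kron_one_mat H_def M_def L_def ..
  have lift_\<nu>: "kron_lift n D \<nu> C = kron (kron (kron (kron (1\<^sub>m H) C) (1\<^sub>m M)) (1\<^sub>m (n \<mu>))) (1\<^sub>m L)"
    unfolding kron_lift_def prod_lessThan_split3[OF \<mu>\<nu>] H_def M_def L_def
    by (simp only: kron_one_mat[symmetric] kron_assoc)
  have one: "\<And>k. (1\<^sub>m k :: 'a mat) \<in> carrier_mat k k" by simp
  show ?thesis unfolding lift_\<mu> lift_\<nu>
    by (simp only: kron_mult_kron5[OF one one one B one one C one one one]
        kron_mult_kron5[OF one C one one one one one one B one]
        left_mult_one_mat[OF B] left_mult_one_mat[OF C] right_mult_one_mat[OF B]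
        right_mult_one_mat[OF C] left_mult_one_mat[OF one])
qed

lemma kron_lift_commute:
  fixes B C :: "'a::comm_ring_1 mat"
  assumes "\<mu> < D" "\<nu> < D" "\<mu> \<noteq> \<nu>"
    and "B \<in> carrier_mat (n \<mu>) (n \<mu>)" "C \<in> carrier_mat (n \<nu>) (n \<nu>)"
  shows "kron_lift n D \<mu> B * kron_lift n D \<nu> C = kron_lift n D \<nu> C * kron_lift n D \<mu> B"
  using assms kron_lift_commute_less[of \<mu> \<nu> D B n C] kron_lift_commute_less[of \<nu> \<mu> D C n B]
  by (cases "\<mu> < \<nu>") auto

lemma skew_hermitian_kron_lift:
  assumes "\<mu> < D" and B: "B \<in> carrier_mat (n \<mu>) (n \<mu>)" and "skew_hermitian B"
  shows "skew_hermitian (kron_lift n D \<mu> B)"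
  unfolding kron_lift_def
  by (intro skew_hermitian_kron_one_right[OF kron_carrier_mat[OF one_carrier_mat B]]
      skew_hermitian_kron_one_left[OF B] assms)

lemma kron_lift_Suc:
  "\<mu> < D \<Longrightarrow> kron_lift n (Suc D) \<mu> B = kron (1\<^sub>m (n D)) (kron_lift n D \<mu> B)"
  unfolding kron_lift_def
  by (simp only: prod.atLeastLessThan_Suc[of "Suc \<mu>" D] Suc_le_eq if_True mult.commute[of _ "n D"]
      kron_one_mat[symmetric] kron_assoc)

lemma kron_lift_Suc_top:
  "kron_lift n (Suc D) D B = kron B (1\<^sub>m (\<Prod>\<nu><D. n \<nu>))"
  for B :: "'a::semiring_1 mat"
  unfolding kron_lift_def by (simp add: kron_one_mat_1_left[unfolded One_nat_def])

text \<open>\<open>grid_set n S r D\<close> is \<open>S\<^sub>D\<^sub>-\<^sub>1 \<times> \<dots> \<times> S\<^sub>0 \<times> {0..<r}\<close>, written in the mixed-radix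
  indexing of the Kronecker product (the factor \<open>D - 1\<close> varying slowest).\<close>

fun grid_set :: "(nat \<Rightarrow> nat) \<Rightarrow> (nat \<Rightarrow> nat set) \<Rightarrow> nat \<Rightarrow> nat \<Rightarrow> nat set" where
  "grid_set n S r 0 = {0..<r}"
| "grid_set n S r (Suc D) = (\<lambda>(k,i). k * ((\<Prod>\<nu><D. n \<nu>) * r) + i) ` (S D \<times> grid_set n S r D)"

lemma grid_set_subset:
  "(\<And>\<mu>. \<mu> < D \<Longrightarrow> S \<mu> \<subseteq> {0..<n \<mu>}) \<Longrightarrow> grid_set n S r D \<subseteq> {0..<(\<Prod>\<nu><D. n \<nu>) * r}"
proof (induction D)
  case (Suc D)
  then have IH: "grid_set n S r D \<subseteq> {0..<(\<Prod>\<nu><D. n \<nu>) * r}" and SD: "S D \<subseteq> {0..<n D}"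
    by simp_all
  have "k * ((\<Prod>\<nu><D. n \<nu>) * r) + i < n D * ((\<Prod>\<nu><D. n \<nu>) * r)"
    if "k \<in> S D" "i \<in> grid_set n S r D" for k i
    using that IH SD by (intro mult_add_less_mult) auto
  then show ?case by (auto simp: algebra_simps)
qed simp

lemma finite_grid_set: "(\<And>\<mu>. \<mu> < D \<Longrightarrow> finite (S \<mu>)) \<Longrightarrow> finite (grid_set n S r D)"
  by (induction D) auto

lemma card_grid_set_le:
  "(\<And>\<mu>. \<mu> < D \<Longrightarrow> finite (S \<mu>)) \<Longrightarrow> card (grid_set n S r D) \<le> r * (\<Prod>\<mu><D. card (S \<mu>))"
proof (induction D)
  case (Suc D)
  have "card (grid_set n S r (Suc D)) \<le> card (S D \<times> grid_set n S r D)"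
    by (simp only: grid_set.simps) (rule card_image_le, simp add: finite_grid_set Suc.prems)
  also have "\<dots> \<le> card (S D) * (r * (\<Prod>\<mu><D. card (S \<mu>)))"
    using Suc by (simp add: card_cartesian_product)
  finally show ?case by (simp add: algebra_simps)
qed simp

text \<open>A vector killed by \<open>B \<otimes> 1\<close> and by all \<open>1 \<otimes> Z\<^sub>\<mu>\<close> vanishes as soon as
  it vanishes on \<open>P \<times> Q\<close>, where \<open>P\<close> and \<open>Q\<close> determine the kernels of \<open>B\<close>
  and of the family \<open>Z\<close>: first every slice over \<open>k \<in> P\<close> vanishes, then every column.\<close>

lemma kron_kernel_step:
  fixes B :: "'a::comm_ring_1 mat" and Z :: "nat \<Rightarrow> 'a mat"
  assumes B: "B \<in> carrier_mat a a" and Z: "\<And>\<mu>. \<mu> < K \<Longrightarrow> Z \<mu> \<in> carrier_mat m m"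
    and B_ker: "\<And>w. w \<in> carrier_vec a \<Longrightarrow> B *\<^sub>v w = 0\<^sub>v a \<Longrightarrow> \<forall>k\<in>P. w $ k = 0 \<Longrightarrow> w = 0\<^sub>v a"
    and Z_ker: "\<And>u. u \<in> carrier_vec m \<Longrightarrow> \<forall>\<mu><K. Z \<mu> *\<^sub>v u = 0\<^sub>v m \<Longrightarrow> \<forall>i\<in>Q. u $ i = 0 \<Longrightarrow> u = 0\<^sub>v m"
    and P: "P \<subseteq> {0..<a}" and Q: "Q \<subseteq> {0..<m}"
    and v: "v \<in> carrier_vec (a*m)"
    and hB: "kron B (1\<^sub>m m) *\<^sub>v v = 0\<^sub>v (a*m)"
    and hZ: "\<forall>\<mu><K. kron (1\<^sub>m a) (Z \<mu>) *\<^sub>v v = 0\<^sub>v (a*m)"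
    and hPQ: "\<forall>k\<in>P. \<forall>i\<in>Q. v $ (k*m + i) = 0"
  shows "v = 0\<^sub>v (a*m)"
proof -
  have slice: "vec m (\<lambda>p. v $ (k*m + p)) = 0\<^sub>v m" if kP: "k \<in> P" for k
  proof (rule Z_ker)
    have k: "k < a" using kP P by auto
    show "\<forall>\<mu><K. Z \<mu> *\<^sub>v vec m (\<lambda>p. v $ (k*m + p)) = 0\<^sub>v m"
    proof (intro allI impI eq_vecI)
      fix \<mu> i assume \<mu>: "\<mu> < K" and "i < dim_vec (0\<^sub>v m :: 'a vec)"
      then have i: "i < m" by simp
      have "(Z \<mu> *\<^sub>v vec m (\<lambda>p. v $ (k*m + p))) $ i = (kron (1\<^sub>m a) (Z \<mu>) *\<^sub>v v) $ (k*m + i)"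
        by (rule index_kron_one_left_mult_vec[OF Z[OF \<mu>] v k i, symmetric])
      then show "(Z \<mu> *\<^sub>v vec m (\<lambda>p. v $ (k*m + p))) $ i = 0\<^sub>v m $ i"
        using hZ \<mu> i mult_add_less_mult[OF k i] by simp
    qed (simp add: carrier_matD(1)[OF Z])
    show "\<forall>i\<in>Q. vec m (\<lambda>p. v $ (k*m + p)) $ i = 0" using hPQ kP Q by auto
  qed simp
  have column: "vec a (\<lambda>l. v $ (l*m + i)) = 0\<^sub>v a" if i: "i < m" for i
  proof (rule B_ker)
    show "B *\<^sub>v vec a (\<lambda>l. v $ (l*m + i)) = 0\<^sub>v a"
    proof (rule eq_vecI)
      fix k assume "k < dim_vec (0\<^sub>v a :: 'a vec)"
      then have k: "k < a" by simp
      have "(B *\<^sub>v vec a (\<lambda>l. v $ (l*m + i))) $ k = (kron B (1\<^sub>m m) *\<^sub>v v) $ (k*m + i)"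
        by (rule index_kron_one_right_mult_vec[OF B v k i, symmetric])
      then show "(B *\<^sub>v vec a (\<lambda>l. v $ (l*m + i))) $ k = 0\<^sub>v a $ k"
        using hB k mult_add_less_mult[OF k i] by simp
    qed (use B in simp)
    show "\<forall>k\<in>P. vec a (\<lambda>l. v $ (l*m + i)) $ k = 0"
      using slice i P by (auto simp: vec_eq_iff)
  qed simp
  show ?thesis
  proof (rule eq_vecI)
    fix j assume "j < dim_vec (0\<^sub>v (a*m) :: 'a vec)"
    then have j: "j < a*m" by simp
    then have "j mod m < m" "j div m < a" by (auto intro!: mod_less_divisor gr0I less_mult_imp_div_less)
    then have "vec a (\<lambda>l. v $ (l*m + j mod m)) $ (j div m) = 0"
      using column[of "j mod m"] by simp
    then show "v $ j = 0\<^sub>v (a*m) $ j" using j \<open>j div m < a\<close> by simp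
  qed (use v in simp)
qed

lemma kron_lift_kernel:
  fixes B :: "nat \<Rightarrow> 'a::comm_ring_1 mat"
  assumes B: "\<And>\<mu>. \<mu> < D \<Longrightarrow> B \<mu> \<in> carrier_mat (n \<mu>) (n \<mu>)"
    and S: "\<And>\<mu>. \<mu> < D \<Longrightarrow> S \<mu> \<subseteq> {0..<n \<mu>}"
    and B_ker: "\<And>\<mu> w. \<mu> < D \<Longrightarrow> w \<in> carrier_vec (n \<mu>) \<Longrightarrow> B \<mu> *\<^sub>v w = 0\<^sub>v (n \<mu>) \<Longrightarrow>
                  \<forall>k\<in>S \<mu>. w $ k = 0 \<Longrightarrow> w = 0\<^sub>v (n \<mu>)"
    and v: "v \<in> carrier_vec ((\<Prod>\<nu><D. n \<nu>) * r)"
    and ker: "\<forall>\<mu><D. kron (kron_lift n D \<mu> (B \<mu>)) (1\<^sub>m r) *\<^sub>v v = 0\<^sub>v ((\<Prod>\<nu><D. n \<nu>) * r)"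
    and grid: "\<forall>j\<in>grid_set n S r D. v $ j = 0"
  shows "v = 0\<^sub>v ((\<Prod>\<nu><D. n \<nu>) * r)"
  using assms
proof (induction D arbitrary: v)
  case 0
  then show ?case by (auto intro!: eq_vecI)
next
  case (Suc D)
  define m where "m = (\<Prod>\<nu><D. n \<nu>) * r"
  define Z where "Z \<mu> = kron (kron_lift n D \<mu> (B \<mu>)) (1\<^sub>m r)" for \<mu>
  have size: "(\<Prod>\<nu><Suc D. n \<nu>) * r = n D * m" unfolding m_def by (simp add: algebra_simps)
  have Z: "Z \<mu> \<in> carrier_mat m m" if "\<mu> < D" for \<mu>
    unfolding Z_def m_def using that Suc.prems(1)
    by (intro kron_carrier_mat kron_lift_carrier_mat one_carrier_mat) simp_all
  have lift_below: "kron (kron_lift n (Suc D) \<mu> (B \<mu>)) (1\<^sub>m r) = kron (1\<^sub>m (n D)) (Z \<mu>)"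
    if "\<mu> < D" for \<mu>
    unfolding Z_def using that by (simp add: kron_lift_Suc kron_assoc)
  have lift_top: "kron (kron_lift n (Suc D) D (B D)) (1\<^sub>m r) = kron (B D) (1\<^sub>m m)"
    unfolding m_def kron_lift_Suc_top kron_assoc kron_one_mat ..
  show ?case unfolding size
  proof (rule kron_kernel_step[OF Suc.prems(1)[OF lessI] Z])
    show "\<And>u. u \<in> carrier_vec m \<Longrightarrow> \<forall>\<mu><D. Z \<mu> *\<^sub>v u = 0\<^sub>v m \<Longrightarrow>
        \<forall>i\<in>grid_set n S r D. u $ i = 0 \<Longrightarrow> u = 0\<^sub>v m"
      unfolding m_def Z_def by (rule Suc.IH) (use Suc.prems in auto)
    show "grid_set n S r D \<subseteq> {0..<m}" unfolding m_def by (rule grid_set_subset) (use Suc.prems in auto)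
    show "kron (B D) (1\<^sub>m m) *\<^sub>v v = 0\<^sub>v (n D * m)"
      using Suc.prems(5) unfolding size lift_top[symmetric] by blast
    show "\<forall>\<mu><D. kron (1\<^sub>m (n D)) (Z \<mu>) *\<^sub>v v = 0\<^sub>v (n D * m)"
      using Suc.prems(5) unfolding size by (auto simp flip: lift_below)
    show "\<forall>k\<in>S D. \<forall>i\<in>grid_set n S r D. v $ (k * m + i) = 0"
      using Suc.prems(6) unfolding m_def by auto
    show "\<And>w. w \<in> carrier_vec (n D) \<Longrightarrow> B D *\<^sub>v w = 0\<^sub>v (n D) \<Longrightarrow> \<forall>k\<in>S D. w $ k = 0 \<Longrightarrow> w = 0\<^sub>v (n D)"
      by (rule Suc.prems(3)) auto
    show "S D \<subseteq> {0..<n D}" using Suc.prems(2) by simp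
    show "v \<in> carrier_vec (n D * m)" using Suc.prems(4) unfolding size .
  qed
qed

definition anchors :: "bool \<Rightarrow> nat set" where
  "anchors c = (if c then {0, 1} else {0})"

lemma card_anchors: "card (anchors c) = (if c then 2 else 1)"
  unfolding anchors_def by simp

lemma factor_edges_step_iff:
  assumes k: "k + 1 < n \<mu>" and wrap: "cyc \<mu> \<Longrightarrow> 1 \<le> k" and j: "j < n \<mu>"
  shows "(k,j) \<in> factor_edges cyc n \<mu> \<longleftrightarrow> j = k + 1"
    and "(j,k) \<in> factor_edges cyc n \<mu> \<longleftrightarrow> k = j + 1"
proof -
  show "(k,j) \<in> factor_edges cyc n \<mu> \<longleftrightarrow> j = k + 1"
    using k by (auto simp: factor_edges_def cycle_edges_def path_edges_def)
  show "(j,k) \<in> factor_edges cyc n \<mu> \<longleftrightarrow> k = j + 1"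
  proof (cases "cyc \<mu>")
    case True
    have "(j,k) \<in> cycle_edges (n \<mu>) \<longleftrightarrow> k = (j + 1) mod n \<mu>"
      using j by (auto simp: cycle_edges_def)
    also have "\<dots> \<longleftrightarrow> k = j + 1"
    proof (cases "j + 1 < n \<mu>")
      case False
      then have "j + 1 = n \<mu>" using j by simp
      then show ?thesis using wrap[OF True] k by auto
    qed simp
    finally show ?thesis using True by (simp add: factor_edges_def)
  next
    case False
    then show ?thesis using k by (auto simp: factor_edges_def path_edges_def)
  qed
qed

lemma index_A_as_factor_mult_vec:
  assumes k: "k + 1 < n \<mu>" and wrap: "cyc \<mu> \<Longrightarrow> 1 \<le> k" and w: "w \<in> carrier_vec (n \<mu>)"
  shows "(A_as (n \<mu>) (factor_edges cyc n \<mu>) *\<^sub>v w) $ k = w $ (k + 1) - (if 1 \<le> k then w $ (k - 1) else 0)"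
proof -
  let ?E = "factor_edges cyc n \<mu>"
  have "(A_as (n \<mu>) ?E *\<^sub>v w) $ k = (\<Sum>j\<in>{0..<n \<mu>}. A_as (n \<mu>) ?E $$ (k,j) * w $ j)"
    by (rule index_mult_mat_vec_sum[of _ "n \<mu>" "n \<mu>" w k]) (use k w in \<open>simp_all add: A_as_def\<close>)
  also have "\<dots> = (\<Sum>j\<in>{0..<n \<mu>}. (if j = k + 1 then w $ j else 0) + (if 1 \<le> k \<and> j = k - 1 then - w $ j else 0))"
  proof (intro sum.cong refl)
    fix j assume "j \<in> {0..<n \<mu>}"
    then have j: "j < n \<mu>" by simp
    then show "A_as (n \<mu>) ?E $$ (k,j) * w $ j
        = (if j = k + 1 then w $ j else 0) + (if 1 \<le> k \<and> j = k - 1 then - w $ j else 0)"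
      using k factor_edges_step_iff[of k n \<mu> cyc j, OF k wrap j] by (auto simp: A_as_def)
  qed
  also have "\<dots> = w $ (k + 1) - (if 1 \<le> k then w $ (k - 1) else 0)"
    using k by (simp add: sum.distrib sum.delta) linarith
  finally show ?thesis .
qed

text \<open>The recursion \<open>w\<^sub>k\<^sub>+\<^sub>1 = w\<^sub>k\<^sub>-\<^sub>1\<close> propagates the anchor values: for a path row \<open>0\<close>
  also gives \<open>w\<^sub>1 = 0\<close>, for a cycle \<open>w\<^sub>1\<close> is an anchor.\<close>

lemma A_as_factor_kernel:
  assumes n: "2 \<le> n \<mu>" and w: "w \<in> carrier_vec (n \<mu>)"
    and ker: "A_as (n \<mu>) (factor_edges cyc n \<mu>) *\<^sub>v w = 0\<^sub>v (n \<mu>)"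
    and anchor: "\<forall>k\<in>anchors (cyc \<mu>). w $ k = 0"
  shows "w = 0\<^sub>v (n \<mu>)"
proof -
  have row: "(A_as (n \<mu>) (factor_edges cyc n \<mu>) *\<^sub>v w) $ k = 0" if "k < n \<mu>" for k
    using ker that by simp
  have step: "w $ (k + 1) = w $ (k - 1)" if "1 \<le> k" "k + 1 < n \<mu>" for k
    using index_A_as_factor_mult_vec[of k n \<mu> cyc w] row[of k] that w by simp
  have w0: "w $ 0 = 0" using anchor by (simp add: anchors_def)
  have w1: "w $ 1 = 0"
  proof (cases "cyc \<mu>")
    case True
    then show ?thesis using anchor by (simp add: anchors_def)
  next
    case False
    then show ?thesis
      using index_A_as_factor_mult_vec[of 0 n \<mu> cyc w] row[of 0] n w by simp
  qed
  have "w $ k = 0" if "k < n \<mu>" for k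
    using that
  proof (induction k rule: less_induct)
    case (less k)
    show ?case
    proof (cases "k < 2")
      case True
      then show ?thesis using w0 w1 by (cases k) auto
    next
      case False
      then have "w $ k = w $ (k - 2)"
        using step[of "k - 1"] less.prems by (simp add: numeral_2_eq_2)
      also have "\<dots> = 0" using less.IH[of "k - 2"] less.prems False by simp
      finally show ?thesis .
    qed
  qed
  then show ?thesis using w by (intro eq_vecI) auto
qed

lemma factor_edges_antisym:
  assumes n: "cyc \<mu> \<Longrightarrow> 3 \<le> n \<mu>" and e: "(i,j) \<in> factor_edges cyc n \<mu>"
  shows "(j,i) \<notin> factor_edges cyc n \<mu>"
proof (cases "cyc \<mu>")
  case True
  then have n3: "3 \<le> n \<mu>" using n by simp
  show ?thesis
  proof
    assume "(j,i) \<in> factor_edges cyc n \<mu>"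
    then have ji: "j < n \<mu>" "i = (j + 1) mod n \<mu>"
      using True by (auto simp: factor_edges_def cycle_edges_def)
    from e have ij: "i < n \<mu>" "j = (i + 1) mod n \<mu>"
      using True by (auto simp: factor_edges_def cycle_edges_def)
    have "i = ((i + 1) mod n \<mu> + 1) mod n \<mu>"
      using ji(2) unfolding ij(2) .
    also have "\<dots> = (i + 2) mod n \<mu>"
      by (metis mod_add_left_eq add.assoc one_add_one)
    finally have "(i + 2) mod n \<mu> = i" by simp
    moreover have "(i + 2) mod n \<mu> \<noteq> i"
      using ij(1) n3 by (cases "i + 2 < n \<mu>") (auto simp: mod_if)
    ultimately show False by simp
  qed
next
  case False
  then show ?thesis using e by (auto simp: factor_edges_def path_edges_def)
qed

lemma conn_rel_path_connected:
  assumes E: "\<And>i. i + 1 < m \<Longrightarrow> (i, i + 1) \<in> E" and x: "x < m" and y: "y < m"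
  shows "(x,y) \<in> conn_rel m E"
proof -
  have forward: "(0,i) \<in> (E \<union> E\<inverse>)\<^sup>*" if "i < m" for i
    using that
  proof (induction i)
    case (Suc i)
    then have "(i, Suc i) \<in> E \<union> E\<inverse>" using E[of i] by simp
    then show ?case using Suc by (meson Suc_lessD rtrancl_into_rtrancl)
  qed simp
  have backward: "(i,0) \<in> (E \<union> E\<inverse>)\<^sup>*" if "i < m" for i
    using that
  proof (induction i)
    case (Suc i)
    then have "(Suc i, i) \<in> E \<union> E\<inverse>" using E[of i] by simp
    then show ?case using Suc by (meson Suc_lessD converse_rtrancl_into_rtrancl)
  qed simp
  have "(x,y) \<in> (E \<union> E\<inverse>)\<^sup>*" using backward[OF x] forward[OF y] by (rule rtrancl_trans)
  then show ?thesis unfolding conn_rel_def using x y by simp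
qed

lemma beta0_path_connected:
  assumes E: "\<And>i. i + 1 < m \<Longrightarrow> (i, i + 1) \<in> E" and m: "1 \<le> m"
  shows "beta0 m E = 1"
proof -
  have "conn_rel m E `` {x} = {0..<m}" if "x < m" for x
    using conn_rel_path_connected[OF E that] by (auto simp: conn_rel_def)
  then have "{0..<m} // conn_rel m E = {{0..<m}}"
    unfolding quotient_def using m by auto
  then show ?thesis unfolding beta0_def by simp
qed

lemma card_path_edges: "card (path_edges m) = m - 1"
proof -
  have "path_edges m = (\<lambda>i. (i, i + 1)) ` {..<m - 1}"
    unfolding path_edges_def by auto
  moreover have "inj_on (\<lambda>i. (i, i + 1::nat)) {..<m - 1}" by (auto simp: inj_on_def)
  ultimately show ?thesis by (simp add: card_image)
qed

lemma card_cycle_edges: "card (cycle_edges m) = m"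
proof -
  have "cycle_edges m = (\<lambda>i. (i, (i + 1) mod m)) ` {..<m}"
    unfolding cycle_edges_def by auto
  moreover have "inj_on (\<lambda>i. (i, (i + 1) mod m)) {..<m}" by (auto simp: inj_on_def)
  ultimately show ?thesis by (simp add: card_image)
qed

text \<open>A path is a tree (\<open>\<beta>\<^sub>0 + \<beta>\<^sub>1 = 1\<close>) and a cycle has one independent cycle
  (\<open>\<beta>\<^sub>0 + \<beta>\<^sub>1 = 2\<close>), matching the number of anchors.\<close>

lemma betti_sum_factor:
  assumes "1 \<le> n \<mu>"
  shows "int (beta0 (n \<mu>) (factor_edges cyc n \<mu>)) + beta1 (n \<mu>) (factor_edges cyc n \<mu>)
       = int (card (anchors (cyc \<mu>)))"
proof -
  have "beta0 (n \<mu>) (factor_edges cyc n \<mu>) = 1"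
    by (rule beta0_path_connected[OF _ assms])
      (auto simp: factor_edges_def cycle_edges_def path_edges_def)
  then show ?thesis
    using assms by (simp add: beta1_def factor_edges_def card_cycle_edges card_path_edges
        card_anchors of_nat_diff)
qed

lemma prod_card_anchors:
  fixes D :: nat
  shows "(\<Prod>\<mu><D. card (anchors (cyc \<mu>))) = 2 ^ card {\<mu>\<in>{0..<D}. cyc \<mu>}"
proof -
  have "(\<Prod>\<mu><D. card (anchors (cyc \<mu>))) = (\<Prod>\<mu>\<in>{..<D}. if cyc \<mu> then 2 else 1)"
    by (simp add: card_anchors)
  also have "\<dots> = 2 ^ card ({..<D} \<inter> {\<mu>. cyc \<mu>})"
    by (subst prod.If_cases) simp_all
  also have "{..<D} \<inter> {\<mu>. cyc \<mu>} = {\<mu>\<in>{0..<D}. cyc \<mu>}"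
    by auto
  finally show ?thesis .
qed

definition lifted_adj :: "(nat \<Rightarrow> bool) \<Rightarrow> (nat \<Rightarrow> nat) \<Rightarrow> nat \<Rightarrow> nat \<Rightarrow> nat \<Rightarrow> complex mat" where
  "lifted_adj cyc n r D \<mu> = kron (kron_lift n D \<mu> (A_as (n \<mu>) (factor_edges cyc n \<mu>))) (1\<^sub>m r)"

lemma dirac_kron_lift:
  "dirac D cyc n r \<gamma> = mat ((\<Prod>\<nu><D. n \<nu>) * r) ((\<Prod>\<nu><D. n \<nu>) * r)
     (\<lambda>ij. \<Sum>\<mu><D. kron (kron_lift n D \<mu> (A_as (n \<mu>) (factor_edges cyc n \<mu>))) (\<gamma> \<mu>) $$ ij)"
  unfolding dirac_def kron_lift_def Let_def ..

lemma dirac_square: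
  assumes \<gamma>: "\<And>\<mu>. \<mu> < D \<Longrightarrow> \<gamma> \<mu> \<in> carrier_mat r r"
    and cl: "\<And>\<mu> \<nu>. \<mu> < D \<Longrightarrow> \<nu> < D \<Longrightarrow>
               \<gamma> \<mu> * \<gamma> \<nu> + \<gamma> \<nu> * \<gamma> \<mu> = (if \<mu> = \<nu> then 2 else 0) \<cdot>\<^sub>m 1\<^sub>m r"
  shows "dirac D cyc n r \<gamma> * dirac D cyc n r \<gamma>
       = mat ((\<Prod>\<nu><D. n \<nu>) * r) ((\<Prod>\<nu><D. n \<nu>) * r)
           (\<lambda>ij. \<Sum>\<mu><D. (lifted_adj cyc n r D \<mu> * lifted_adj cyc n r D \<mu>) $$ ij)"
  unfolding dirac_kron_lift lifted_adj_def
proof (rule clifford_sum_square[OF _ \<gamma> _ cl])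
  show "kron_lift n D \<mu> (A_as (n \<mu>) (factor_edges cyc n \<mu>)) \<in> carrier_mat (\<Prod>\<nu><D. n \<nu>) (\<Prod>\<nu><D. n \<nu>)"
    if "\<mu> < D" for \<mu>
    using that by (rule kron_lift_carrier_mat) (simp add: A_as_def)
  show "kron_lift n D \<mu> (A_as (n \<mu>) (factor_edges cyc n \<mu>)) * kron_lift n D \<nu> (A_as (n \<nu>) (factor_edges cyc n \<nu>))
      = kron_lift n D \<nu> (A_as (n \<nu>) (factor_edges cyc n \<nu>)) * kron_lift n D \<mu> (A_as (n \<mu>) (factor_edges cyc n \<mu>))"
    if "\<mu> < D" "\<nu> < D" for \<mu> \<nu>
    using that by (cases "\<mu> = \<nu>") (auto intro: kron_lift_commute simp: A_as_def)
qed

lemma dirac_square_diag_on_injective: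
  assumes cycle: "\<And>\<mu>. \<mu> < D \<Longrightarrow> cyc \<mu> \<Longrightarrow> 3 \<le> n \<mu>" and n: "\<And>\<mu>. \<mu> < D \<Longrightarrow> 2 \<le> n \<mu>"
    and \<gamma>: "\<And>\<mu>. \<mu> < D \<Longrightarrow> \<gamma> \<mu> \<in> carrier_mat r r"
    and cl: "\<And>\<mu> \<nu>. \<mu> < D \<Longrightarrow> \<nu> < D \<Longrightarrow>
               \<gamma> \<mu> * \<gamma> \<nu> + \<gamma> \<nu> * \<gamma> \<mu> = (if \<mu> = \<nu> then 2 else 0) \<cdot>\<^sub>m 1\<^sub>m r"
    and v: "v \<in> carrier_vec ((\<Prod>\<nu><D. n \<nu>) * r)"
    and ker: "(dirac D cyc n r \<gamma> * dirac D cyc n r \<gamma>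
               + diag_on ((\<Prod>\<nu><D. n \<nu>) * r) (grid_set n (\<lambda>\<mu>. anchors (cyc \<mu>)) r D) (-1)) *\<^sub>v v
             = 0\<^sub>v ((\<Prod>\<nu><D. n \<nu>) * r)"
  shows "v = 0\<^sub>v ((\<Prod>\<nu><D. n \<nu>) * r)"
proof -
  let ?m = "(\<Prod>\<nu><D. n \<nu>) * r"
  have A: "A_as (n \<mu>) (factor_edges cyc n \<mu>) \<in> carrier_mat (n \<mu>) (n \<mu>)" for \<mu>
    by (simp add: A_as_def)
  have anchors: "anchors (cyc \<mu>) \<subseteq> {0..<n \<mu>}" if "\<mu> < D" for \<mu>
    using n[OF that] by (auto simp: anchors_def)
  have L: "lifted_adj cyc n r D \<mu> \<in> carrier_mat ?m ?m" if "\<mu> < D" for \<mu>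
    unfolding lifted_adj_def by (intro kron_carrier_mat kron_lift_carrier_mat[OF that A] one_carrier_mat)
  have skew: "skew_hermitian (lifted_adj cyc n r D \<mu>)" if "\<mu> < D" for \<mu>
    unfolding lifted_adj_def
    using that cycle factor_edges_antisym[where cyc=cyc and n=n and \<mu>=\<mu>]
    by (intro skew_hermitian_kron_one_right[OF kron_lift_carrier_mat[OF that A]]
        skew_hermitian_kron_lift[OF that A] skew_hermitian_A_as) auto
  have "(mat ?m ?m (\<lambda>ij. \<Sum>\<mu><D. (lifted_adj cyc n r D \<mu> * lifted_adj cyc n r D \<mu>) $$ ij)
         + diag_on ?m (grid_set n (\<lambda>\<mu>. anchors (cyc \<mu>)) r D) (-1)) *\<^sub>v v = 0\<^sub>v ?m"
    using ker by (simp only: dirac_square[OF \<gamma> cl])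
  from skew_hermitian_squares_kernel[where D=D and L="lifted_adj cyc n r D",
      OF L skew v grid_set_subset[OF anchors] this]
  have "\<forall>\<mu><D. kron (kron_lift n D \<mu> (A_as (n \<mu>) (factor_edges cyc n \<mu>))) (1\<^sub>m r) *\<^sub>v v = 0\<^sub>v ?m"
    and "\<forall>j\<in>grid_set n (\<lambda>\<mu>. anchors (cyc \<mu>)) r D. v $ j = 0"
    unfolding lifted_adj_def by simp_all
  moreover have "w = 0\<^sub>v (n \<mu>)"
    if "\<mu> < D" "w \<in> carrier_vec (n \<mu>)" "A_as (n \<mu>) (factor_edges cyc n \<mu>) *\<^sub>v w = 0\<^sub>v (n \<mu>)"
      "\<forall>k\<in>anchors (cyc \<mu>). w $ k = 0" for \<mu> w
    using A_as_factor_kernel[OF n[OF that(1)] that(2-4)] .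
  ultimately show ?thesis
    using kron_lift_kernel[where B="\<lambda>\<mu>. A_as (n \<mu>) (factor_edges cyc n \<mu>)"
        and S="\<lambda>\<mu>. anchors (cyc \<mu>)", OF A anchors _ v] by blast
qed

theorem theorem6:
  fixes D d r :: nat and cyc :: "nat \<Rightarrow> bool" and n :: "nat \<Rightarrow> nat"
    and \<gamma> :: "nat \<Rightarrow> complex mat"
  assumes "D \<ge> 1" and "d \<le> D"
    and "card {\<mu>\<in>{0..<D}. cyc \<mu>} = d"
    and "\<And>\<mu>. \<mu> < D \<Longrightarrow> cyc \<mu> \<Longrightarrow> n \<mu> \<ge> 3"
    and "\<And>\<mu>. \<mu> < D \<Longrightarrow> \<not> cyc \<mu> \<Longrightarrow> n \<mu> \<ge> 2"
    and "\<And>\<mu>. \<mu> < D \<Longrightarrow> \<gamma> \<mu> \<in> carrier_mat r r"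
    and "\<And>\<mu> \<nu>. \<mu> < D \<Longrightarrow> \<nu> < D \<Longrightarrow>
           \<gamma> \<mu> * \<gamma> \<nu> + \<gamma> \<nu> * \<gamma> \<mu> = (if \<mu> = \<nu> then 2 else 0) \<cdot>\<^sub>m 1\<^sub>m r"
  shows "int ((\<Prod>\<mu><D. n \<mu>) * r) - int (vec_space.rank ((\<Prod>\<mu><D. n \<mu>) * r) (dirac D cyc n r \<gamma>))
           \<le> int r * (\<Prod>\<mu><D. int (beta0 (n \<mu>) (factor_edges cyc n \<mu>)) + beta1 (n \<mu>) (factor_edges cyc n \<mu>))
       \<and> int r * (\<Prod>\<mu><D. int (beta0 (n \<mu>) (factor_edges cyc n \<mu>)) + beta1 (n \<mu>) (factor_edges cyc n \<mu>))
           = int r * 2 ^ d"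
proof -
  let ?m = "(\<Prod>\<mu><D. n \<mu>) * r" and ?R = "grid_set n (\<lambda>\<mu>. anchors (cyc \<mu>)) r D"
  have n: "2 \<le> n \<mu>" if "\<mu> < D" for \<mu>
    using assms(4,5)[OF that] by (cases "cyc \<mu>") auto
  have R: "?R \<subseteq> {0..<?m}"
    by (rule grid_set_subset) (auto simp: anchors_def dest: n)
  have rank: "?m \<le> vec_space.rank ?m (dirac D cyc n r \<gamma>) + card ?R"
    by (rule vec_space.rank_ge_of_square_diag_on_injective[OF _ R dirac_square_diag_on_injective])
      (use assms n in \<open>simp_all add: dirac_def\<close>)
  have card: "card ?R \<le> r * 2 ^ d"
    using card_grid_set_le[where S="\<lambda>\<mu>. anchors (cyc \<mu>)" and n=n and r=r and D=D]
      prod_card_anchors[where D=D and cyc=cyc] assms(3)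
    by (simp add: anchors_def)
  have bound: "int ?m \<le> int (vec_space.rank ?m (dirac D cyc n r \<gamma>) + r * 2 ^ d)"
    using rank card by linarith
  have "(\<Prod>\<mu><D. int (beta0 (n \<mu>) (factor_edges cyc n \<mu>)) + beta1 (n \<mu>) (factor_edges cyc n \<mu>))
      = (\<Prod>\<mu><D. int (card (anchors (cyc \<mu>))))"
    by (rule prod.cong[OF refl], rule betti_sum_factor) (use n in fastforce)
  also have "\<dots> = 2 ^ d"
    using assms(3) by (simp only: of_nat_prod[symmetric]) (simp add: prod_card_anchors)
  finally have betti: "(\<Prod>\<mu><D. int (beta0 (n \<mu>) (factor_edges cyc n \<mu>)) + beta1 (n \<mu>) (factor_edges cyc n \<mu>))
      = 2 ^ d" .
  show ?thesis unfolding betti using bound by simp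
qed

end
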